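(* For every cartesian left-additive category $\mathcal{C}$, the category $\mathbf{Lens}_A(\mathcal{C})$ is a cartesian left-additive category, and every cartesian left-additive functor $F:\mathcal{C}\to\mathcal{D}$ induces a cartesian left-additive functor $\mathbf{Lens}_A(F):\mathbf{Lens}_A(\mathcal{C})\to\mathbf{Lens}_A(\mathcal{D})$, sending an object $(A,A')$ to $(F(A),F(A'))$ and a lens $(f,f^* )$ to $(F(f),\overline{f^*})$ where $\overline{f^*}$ is the composite $F(A)\times F(B')\cong F(A\times B')\xrightarrow{F(f^* )}F(A')$. This assignment preserves identities and composition, so that $\mathbf{Lens}_A$ is a functor $\mathbf{CLACat}\to\mathbf{CLACat}$.
   Context: Composition is written diagrammatically: $f;g$ means first $f$ then $g$. A left additive category is a category in which each hom-set is a commutative monoid (addition $+$, zero maps $0$) such that $f;(g+h)=f;g+f;h$ and $f;0=0$. A map $h:X\to Y$ is additive if $(x+y);h=x;h+y;h$ and $0;h=0$ for all $x,y:Z\to X$. A cartesian left-additive category is a left additive category with chosen finite products (projections $\pi_i$, pairing $\langle-,-\rangle$, terminal object) in which all projections are additive. A morphism $f:X\times A\to B$ is additive in the second variable (the variable $A$) if for all $x:Z\to X$ and $a_1,a_2:Z\to A$ one has $\langle x,a_1+a_2\rangle;f=\langle x,a_1\rangle;f+\langle x,a_2\rangle;f$ and $\langle x,0\rangle;f=0$ (equivalently, $f$ is additive as a map $A\to B$ in the coKleisli category of the comonad $X\times-$). $\mathbf{CLACat}$ is the category whose objects are cartesian left-additive categories and whose morphisms are cartesian left-additive functors, i.e.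 functors preserving finite products and the commutative monoid structure on hom-sets ($F(f+g)=F(f)+F(g)$, $F(0)=0$). For a cartesian category $\mathcal{C}$, $\mathbf{Lens}(\mathcal{C})$ has objects pairs $(A,A')$ of objects of $\mathcal{C}$; a morphism $(A,A')\to(B,B')$ is a pair $(f,f^* )$ with $f:A\to B$ and $f^*:A\times B'\to A'$; the identity on $(A,A')$ is $(1_A,\pi_1)$; the composite of $(f,f^* ):(A,A')\to(B,B')$ and $(g,g^* ):(B,B')\to(C,C')$ is $(f;g,\ \langle\pi_0,\langle\pi_0;f,\pi_1\rangle;g^*\rangle;f^* )$. For a cartesian left-additive category $\mathcal{C}$, $\mathbf{Lens}_A(\mathcal{C})$ is the wide subcategory of $\mathbf{Lens}(\mathcal{C})$ consisting of those lenses $(f,f^* )$ whose backward map $f^*:A\times B'\to A'$ is additive in the second variable. *)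

theory Defs
  imports Main
begin

text \<open>Composition is written diagrammatically:
  Comp C f g means first f, then g.\<close>

record ('o, 'a) cla =
  Obj  :: "'o set"
  Arr  :: "'a set"
  Dom  :: "'a \<Rightarrow> 'o"
  Cod  :: "'a \<Rightarrow> 'o"
  Id   :: "'o \<Rightarrow> 'a"
  Comp :: "'a \<Rightarrow> 'a \<Rightarrow> 'a"
  Prod :: "'o \<Rightarrow> 'o \<Rightarrow> 'o"
  Pi0  :: "'o \<Rightarrow> 'o \<Rightarrow> 'a"
  Pi1  :: "'o \<Rightarrow> 'o \<Rightarrow> 'a"
  Pair :: "'a \<Rightarrow> 'a \<Rightarrow> 'a"
  Term :: "'o"
  Bang :: "'o \<Rightarrow> 'a"
  Add  :: "'a \<Rightarrow> 'a \<Rightarrow> 'a"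
  Zero :: "'o \<Rightarrow> 'o \<Rightarrow> 'a"

definition Hom :: "('o, 'a) cla \<Rightarrow> 'o \<Rightarrow> 'o \<Rightarrow> 'a set" where
  "Hom C X Y = {f \<in> Arr C. Dom C f = X \<and> Cod C f = Y}"

definition is_category :: "('o, 'a) cla \<Rightarrow> bool" where
  "is_category C \<longleftrightarrow>
     (\<forall>f \<in> Arr C. Dom C f \<in> Obj C \<and> Cod C f \<in> Obj C) \<and>
     (\<forall>X \<in> Obj C. Id C X \<in> Hom C X X) \<and>
     (\<forall>X Y Z f g. f \<in> Hom C X Y \<longrightarrow> g \<in> Hom C Y Z \<longrightarrow> Comp C f g \<in> Hom C X Z) \<and>
     (\<forall>X Y f. f \<in> Hom C X Y \<longrightarrow> Comp C (Id C X) f = f \<and> Comp C f (Id C Y) = f) \<and>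
     (\<forall>W X Y Z f g h. f \<in> Hom C W X \<longrightarrow> g \<in> Hom C X Y \<longrightarrow> h \<in> Hom C Y Z \<longrightarrow>
        Comp C (Comp C f g) h = Comp C f (Comp C g h))"

definition has_chosen_products :: "('o, 'a) cla \<Rightarrow> bool" where
  "has_chosen_products C \<longleftrightarrow>
     (\<forall>X \<in> Obj C. \<forall>Y \<in> Obj C.
        Prod C X Y \<in> Obj C \<and>
        Pi0 C X Y \<in> Hom C (Prod C X Y) X \<and>
        Pi1 C X Y \<in> Hom C (Prod C X Y) Y \<and>
        (\<forall>Z \<in> Obj C. \<forall>f g. f \<in> Hom C Z X \<longrightarrow> g \<in> Hom C Z Y \<longrightarrow>
            Pair C f g \<in> Hom C Z (Prod C X Y) \<and>
            Comp C (Pair C f g) (Pi0 C X Y) = f \<and>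
            Comp C (Pair C f g) (Pi1 C X Y) = g) \<and>
        (\<forall>Z \<in> Obj C. \<forall>h \<in> Hom C Z (Prod C X Y).
            Pair C (Comp C h (Pi0 C X Y)) (Comp C h (Pi1 C X Y)) = h)) \<and>
     Term C \<in> Obj C \<and>
     (\<forall>X \<in> Obj C. Bang C X \<in> Hom C X (Term C) \<and>
        (\<forall>h \<in> Hom C X (Term C). h = Bang C X))"

definition is_left_additive :: "('o, 'a) cla \<Rightarrow> bool" where
  "is_left_additive C \<longleftrightarrow>
     (\<forall>X \<in> Obj C. \<forall>Y \<in> Obj C.
        Zero C X Y \<in> Hom C X Y \<and>
        (\<forall>f \<in> Hom C X Y. \<forall>g \<in> Hom C X Y. Add C f g \<in> Hom C X Y \<and> Add C f g = Add C g f) \<and>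
        (\<forall>f \<in> Hom C X Y. \<forall>g \<in> Hom C X Y. \<forall>h \<in> Hom C X Y.
            Add C (Add C f g) h = Add C f (Add C g h)) \<and>
        (\<forall>f \<in> Hom C X Y. Add C f (Zero C X Y) = f)) \<and>
     (\<forall>W X Y f g h. f \<in> Hom C W X \<longrightarrow> g \<in> Hom C X Y \<longrightarrow> h \<in> Hom C X Y \<longrightarrow>
        Comp C f (Add C g h) = Add C (Comp C f g) (Comp C f h)) \<and>
     (\<forall>W X Y f. f \<in> Hom C W X \<longrightarrow> Y \<in> Obj C \<longrightarrow>
        Comp C f (Zero C X Y) = Zero C W Y)"

definition additive_map :: "('o, 'a) cla \<Rightarrow> 'a \<Rightarrow> bool" where
  "additive_map C h \<longleftrightarrow>
     (\<forall>Z \<in> Obj C. \<forall>x \<in> Hom C Z (Dom C h). \<forall>y \<in> Hom C Z (Dom C h).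
        Comp C (Add C x y) h = Add C (Comp C x h) (Comp C y h)) \<and>
     (\<forall>Z \<in> Obj C. Comp C (Zero C Z (Dom C h)) h = Zero C Z (Cod C h))"

definition is_cla :: "('o, 'a) cla \<Rightarrow> bool" where
  "is_cla C \<longleftrightarrow> is_category C \<and> has_chosen_products C \<and> is_left_additive C \<and>
     (\<forall>X \<in> Obj C. \<forall>Y \<in> Obj C. additive_map C (Pi0 C X Y) \<and> additive_map C (Pi1 C X Y))"

definition additive_snd :: "('o, 'a) cla \<Rightarrow> 'o \<Rightarrow> 'o \<Rightarrow> 'a \<Rightarrow> bool" where
  "additive_snd C X A f \<longleftrightarrow>
     (\<forall>Z \<in> Obj C. \<forall>x \<in> Hom C Z X. \<forall>a1 \<in> Hom C Z A. \<forall>a2 \<in> Hom C Z A.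
        Comp C (Pair C x (Add C a1 a2)) f =
          Add C (Comp C (Pair C x a1) f) (Comp C (Pair C x a2) f)) \<and>
     (\<forall>Z \<in> Obj C. \<forall>x \<in> Hom C Z X.
        Comp C (Pair C x (Zero C Z A)) f = Zero C Z (Cod C f))"

type_synonym ('o, 'a, 'p, 'b) cfunctor = "('o \<Rightarrow> 'p) \<times> ('a \<Rightarrow> 'b)"

definition is_iso :: "('o, 'a) cla \<Rightarrow> 'a \<Rightarrow> bool" where
  "is_iso C f \<longleftrightarrow> f \<in> Arr C \<and>
     (\<exists>g \<in> Hom C (Cod C f) (Dom C f).
        Comp C f g = Id C (Dom C f) \<and> Comp C g f = Id C (Cod C f))"

definition iso_inv :: "('o, 'a) cla \<Rightarrow> 'a \<Rightarrow> 'a" where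
  "iso_inv C f = (SOME g. g \<in> Hom C (Cod C f) (Dom C f) \<and>
        Comp C f g = Id C (Dom C f) \<and> Comp C g f = Id C (Cod C f))"

definition is_terminal :: "('o, 'a) cla \<Rightarrow> 'o \<Rightarrow> bool" where
  "is_terminal C T \<longleftrightarrow> T \<in> Obj C \<and> (\<forall>Z \<in> Obj C. \<exists>!h. h \<in> Hom C Z T)"

definition prod_cmp :: "('o, 'a) cla \<Rightarrow> ('p, 'b) cla \<Rightarrow> ('o, 'a, 'p, 'b) cfunctor
    \<Rightarrow> 'o \<Rightarrow> 'o \<Rightarrow> 'b" where
  "prod_cmp C D F X Y = Pair D (snd F (Pi0 C X Y)) (snd F (Pi1 C X Y))"

definition is_cla_functor :: "('o, 'a) cla \<Rightarrow> ('p, 'b) cla \<Rightarrow> ('o, 'a, 'p, 'b) cfunctor \<Rightarrow> bool" where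
  "is_cla_functor C D F \<longleftrightarrow>
     (\<forall>X \<in> Obj C. fst F X \<in> Obj D) \<and>
     (\<forall>X Y f. f \<in> Hom C X Y \<longrightarrow> snd F f \<in> Hom D (fst F X) (fst F Y)) \<and>
     (\<forall>X \<in> Obj C. snd F (Id C X) = Id D (fst F X)) \<and>
     (\<forall>X Y Z f g. f \<in> Hom C X Y \<longrightarrow> g \<in> Hom C Y Z \<longrightarrow>
        snd F (Comp C f g) = Comp D (snd F f) (snd F g)) \<and>
     \<comment> \<open>preservation of finite products (up to the canonical isomorphism)\<close>
     (\<forall>X \<in> Obj C. \<forall>Y \<in> Obj C. is_iso D (prod_cmp C D F X Y)) \<and>
     is_terminal D (fst F (Term C)) \<and>
     \<comment> \<open>preservation of the commutative monoid structure on hom-sets\<close>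
     (\<forall>X Y f g. f \<in> Hom C X Y \<longrightarrow> g \<in> Hom C X Y \<longrightarrow>
        snd F (Add C f g) = Add D (snd F f) (snd F g)) \<and>
     (\<forall>X \<in> Obj C. \<forall>Y \<in> Obj C. snd F (Zero C X Y) = Zero D (fst F X) (fst F Y))"

definition id_functor :: "('o, 'a, 'o, 'a) cfunctor" where
  "id_functor = (\<lambda>X. X, \<lambda>f. f)"

definition comp_functor :: "('o, 'a, 'p, 'b) cfunctor \<Rightarrow> ('p, 'b, 'q, 'c) cfunctor
    \<Rightarrow> ('o, 'a, 'q, 'c) cfunctor" where
  "comp_functor F G = (fst G \<circ> fst F, snd G \<circ> snd F)"

definition functor_eq :: "('o, 'a) cla \<Rightarrow> ('o, 'a, 'p, 'b) cfunctor
    \<Rightarrow> ('o, 'a, 'p, 'b) cfunctor \<Rightarrow> bool" where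
  "functor_eq C F G \<longleftrightarrow> (\<forall>X \<in> Obj C. fst F X = fst G X) \<and> (\<forall>f \<in> Arr C. snd F f = snd G f)"

text \<open>A lens (f, f*) : (A,A') \<rightarrow> (B,B') is represented with its domain and codomain as
  ((A,A'), (B,B'), f, f*).\<close>

type_synonym ('o, 'a) lens = "('o \<times> 'o) \<times> ('o \<times> 'o) \<times> 'a \<times> 'a"

definition lens_dom :: "('o, 'a) lens \<Rightarrow> 'o \<times> 'o" where
  "lens_dom l = fst l"
definition lens_cod :: "('o, 'a) lens \<Rightarrow> 'o \<times> 'o" where
  "lens_cod l = fst (snd l)"
definition lens_fwd :: "('o, 'a) lens \<Rightarrow> 'a" where
  "lens_fwd l = fst (snd (snd l))"
definition lens_bwd :: "('o, 'a) lens \<Rightarrow> 'a" where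
  "lens_bwd l = snd (snd (snd l))"

definition LensA :: "('o, 'a) cla \<Rightarrow> ('o \<times> 'o, ('o, 'a) lens) cla" where
  "LensA C = \<lparr>
    Obj = Obj C \<times> Obj C,
    Arr = {((A, A'), (B, B'), f, fs). A \<in> Obj C \<and> A' \<in> Obj C \<and> B \<in> Obj C \<and> B' \<in> Obj C \<and>
             f \<in> Hom C A B \<and> fs \<in> Hom C (Prod C A B') A' \<and> additive_snd C A B' fs},
    Dom = lens_dom,
    Cod = lens_cod,
    Id = (\<lambda>(A, A'). ((A, A'), (A, A'), Id C A, Pi1 C A A')),
    Comp = (\<lambda>l k. let (A, A') = lens_dom l; (Cc, Cc') = lens_cod k;
                       f = lens_fwd l; fs = lens_bwd l; g = lens_fwd k; gs = lens_bwd k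
                   in ((A, A'), (Cc, Cc'), Comp C f g,
                       Comp C (Pair C (Pi0 C A Cc')
                                  (Comp C (Pair C (Comp C (Pi0 C A Cc') f) (Pi1 C A Cc')) gs))
                              fs)),
    Prod = (\<lambda>(A, A') (B, B'). (Prod C A B, Prod C A' B')),
    Pi0 = (\<lambda>(A, A') (B, B'). ((Prod C A B, Prod C A' B'), (A, A'), Pi0 C A B,
              Pair C (Pi1 C (Prod C A B) A') (Zero C (Prod C (Prod C A B) A') B'))),
    Pi1 = (\<lambda>(A, A') (B, B'). ((Prod C A B, Prod C A' B'), (B, B'), Pi1 C A B,
              Pair C (Zero C (Prod C (Prod C A B) B') A') (Pi1 C (Prod C A B) B'))),
    Pair = (\<lambda>l k. let (Z, Z') = lens_dom l; (A, A') = lens_cod l; (B, B') = lens_cod k;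
                       P = Prod C A' B'
                   in ((Z, Z'), (Prod C A B, P), Pair C (lens_fwd l) (lens_fwd k),
                       Add C
                         (Comp C (Pair C (Pi0 C Z P) (Comp C (Pi1 C Z P) (Pi0 C A' B'))) (lens_bwd l))
                         (Comp C (Pair C (Pi0 C Z P) (Comp C (Pi1 C Z P) (Pi1 C A' B'))) (lens_bwd k)))),
    Term = (Term C, Term C),
    Bang = (\<lambda>(A, A'). ((A, A'), (Term C, Term C), Bang C A, Zero C (Prod C A (Term C)) A')),
    Add = (\<lambda>l k. (lens_dom l, lens_cod l, Add C (lens_fwd l) (lens_fwd k),
                   Add C (lens_bwd l) (lens_bwd k))),
    Zero = (\<lambda>(A, A') (B, B'). ((A, A'), (B, B'), Zero C A B, Zero C (Prod C A B') A'))
  \<rparr>"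

definition LensA_fun :: "('o, 'a) cla \<Rightarrow> ('p, 'b) cla \<Rightarrow> ('o, 'a, 'p, 'b) cfunctor
    \<Rightarrow> ('o \<times> 'o, ('o, 'a) lens, 'p \<times> 'p, ('p, 'b) lens) cfunctor" where
  "LensA_fun C D F =
    (\<lambda>(A, A'). (fst F A, fst F A'),
     \<lambda>((A, A'), (B, B'), f, fs).
        ((fst F A, fst F A'), (fst F B, fst F B'), snd F f,
         Comp D (iso_inv D (prod_cmp C D F A B')) (snd F fs)))"

end

theory Submission
  imports Defs
begin

text \<open>Every piece of structure of \<open>Lens\<^sub>A(C)\<close> is given by explicit formulas in \<open>C\<close>, so each
  axiom of a cartesian left-additive category becomes an equation between arrows of \<open>C\<close>. The
  one place where the restriction to backward maps additive in the second variable is essential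
  is surjective pairing: if \<open>l\<close> has backward map \<open>f\<^sup>* : A \<times> (B' \<times> C') \<rightarrow> A'\<close>, the backward map
  of \<open>\<langle>l;\<pi>\<^sub>0, l;\<pi>\<^sub>1\<rangle>\<close> is \<open>(a, (b', c')) \<mapsto> f\<^sup>*(a, (b', 0)) + f\<^sup>*(a, (0, c'))\<close>, which is \<open>f\<^sup>*\<close>
  exactly when \<open>f\<^sup>*\<close> is additive in the second variable. The same property forces every lens
  into the terminal object to have zero backward map.

  A cartesian left-additive functor \<open>F\<close> preserves only sums of parallel arrows, yet it preserves
  additive maps and maps additive in the second variable: by precomposition, additivity of
  \<open>h : X \<rightarrow> Y\<close> follows from the single equation \<open>(\<pi>\<^sub>0 + \<pi>\<^sub>1);h = \<pi>\<^sub>0;h + \<pi>\<^sub>1;h\<close> on \<open>X \<times> X\<close>,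
  and \<open>F\<close> transports this equation along the comparison isomorphism \<open>\<phi>\<close>. Hence \<open>\<phi>\<inverse>;F(f\<^sup>*)\<close>
  is again additive in the second variable, and, \<open>\<phi>\<close> and \<open>\<phi>\<inverse>\<close> being additive, the product
  comparison \<open>(\<phi>, \<pi>\<^sub>1;\<phi>\<inverse>)\<close> of \<open>Lens\<^sub>A(F)\<close> is a lens with inverse lens \<open>(\<phi>\<inverse>, \<pi>\<^sub>1;\<phi>)\<close>.\<close>

section \<open>Cartesian left-additive categories\<close>

locale cla_category =
  fixes C :: "('o, 'a) cla"
  assumes cla: "is_cla C"
begin

lemma category: "is_category C"
  and chosen_products: "has_chosen_products C"
  and left_additive: "is_left_additive C"
  using cla by (simp_all add: is_cla_def)

lemma dom_obj[simp]: "f \<in> Arr C \<Longrightarrow> Dom C f \<in> Obj C"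
  and cod_obj[simp]: "f \<in> Arr C \<Longrightarrow> Cod C f \<in> Obj C"
  using category by (simp_all add: is_category_def)

lemma id_arr[simp]: "X \<in> Obj C \<Longrightarrow> Id C X \<in> Arr C"
  and id_dom[simp]: "X \<in> Obj C \<Longrightarrow> Dom C (Id C X) = X"
  and id_cod[simp]: "X \<in> Obj C \<Longrightarrow> Cod C (Id C X) = X"
  using category by (auto simp: is_category_def Hom_def)

lemma comp_arr[simp]: "f \<in> Arr C \<Longrightarrow> g \<in> Arr C \<Longrightarrow> Cod C f = Dom C g \<Longrightarrow> Comp C f g \<in> Arr C"
  and comp_dom[simp]: "f \<in> Arr C \<Longrightarrow> g \<in> Arr C \<Longrightarrow> Cod C f = Dom C g \<Longrightarrow> Dom C (Comp C f g) = Dom C f"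
  and comp_cod[simp]: "f \<in> Arr C \<Longrightarrow> g \<in> Arr C \<Longrightarrow> Cod C f = Dom C g \<Longrightarrow> Cod C (Comp C f g) = Cod C g"
proof -
  assume "f \<in> Arr C" "g \<in> Arr C" "Cod C f = Dom C g"
  then have "Comp C f g \<in> Hom C (Dom C f) (Cod C g)"
    using category unfolding is_category_def Hom_def by blast
  then show "Comp C f g \<in> Arr C" "Dom C (Comp C f g) = Dom C f" "Cod C (Comp C f g) = Cod C g"
    by (auto simp: Hom_def)
qed

lemma id_comp[simp]: "f \<in> Arr C \<Longrightarrow> X = Dom C f \<Longrightarrow> Comp C (Id C X) f = f"
  and comp_id[simp]: "f \<in> Arr C \<Longrightarrow> X = Cod C f \<Longrightarrow> Comp C f (Id C X) = f"
  using category unfolding is_category_def Hom_def by blast+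

lemma comp_assoc[simp]: "f \<in> Arr C \<Longrightarrow> g \<in> Arr C \<Longrightarrow> h \<in> Arr C \<Longrightarrow> Cod C f = Dom C g \<Longrightarrow>
   Cod C g = Dom C h \<Longrightarrow> Comp C (Comp C f g) h = Comp C f (Comp C g h)"
  using category unfolding is_category_def Hom_def by blast

lemma prod_obj[simp]: "X \<in> Obj C \<Longrightarrow> Y \<in> Obj C \<Longrightarrow> Prod C X Y \<in> Obj C"
  using chosen_products by (simp add: has_chosen_products_def)

lemma pi0_arr[simp]: "X \<in> Obj C \<Longrightarrow> Y \<in> Obj C \<Longrightarrow> Pi0 C X Y \<in> Arr C"
  and pi0_dom[simp]: "X \<in> Obj C \<Longrightarrow> Y \<in> Obj C \<Longrightarrow> Dom C (Pi0 C X Y) = Prod C X Y"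
  and pi0_cod[simp]: "X \<in> Obj C \<Longrightarrow> Y \<in> Obj C \<Longrightarrow> Cod C (Pi0 C X Y) = X"
  and pi1_arr[simp]: "X \<in> Obj C \<Longrightarrow> Y \<in> Obj C \<Longrightarrow> Pi1 C X Y \<in> Arr C"
  and pi1_dom[simp]: "X \<in> Obj C \<Longrightarrow> Y \<in> Obj C \<Longrightarrow> Dom C (Pi1 C X Y) = Prod C X Y"
  and pi1_cod[simp]: "X \<in> Obj C \<Longrightarrow> Y \<in> Obj C \<Longrightarrow> Cod C (Pi1 C X Y) = Y"
  using chosen_products by (auto simp: has_chosen_products_def Hom_def)

lemma pair_universal:
  assumes "f \<in> Arr C" "g \<in> Arr C" "Dom C f = Dom C g"
  shows "Pair C f g \<in> Hom C (Dom C f) (Prod C (Cod C f) (Cod C g)) \<and>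
    Comp C (Pair C f g) (Pi0 C (Cod C f) (Cod C g)) = f \<and>
    Comp C (Pair C f g) (Pi1 C (Cod C f) (Cod C g)) = g"
proof -
  have "f \<in> Hom C (Dom C f) (Cod C f)" "g \<in> Hom C (Dom C f) (Cod C g)"
    using assms by (auto simp: Hom_def)
  then show ?thesis
    using chosen_products assms unfolding has_chosen_products_def by (meson cod_obj dom_obj)
qed

lemma pair_arr[simp]: "f \<in> Arr C \<Longrightarrow> g \<in> Arr C \<Longrightarrow> Dom C f = Dom C g \<Longrightarrow> Pair C f g \<in> Arr C"
  and pair_dom[simp]: "f \<in> Arr C \<Longrightarrow> g \<in> Arr C \<Longrightarrow> Dom C f = Dom C g \<Longrightarrow>
    Dom C (Pair C f g) = Dom C f"
  and pair_cod[simp]: "f \<in> Arr C \<Longrightarrow> g \<in> Arr C \<Longrightarrow> Dom C f = Dom C g \<Longrightarrow>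
    Cod C (Pair C f g) = Prod C (Cod C f) (Cod C g)"
  using pair_universal by (auto simp: Hom_def)

lemma pair_pi0[simp]: "f \<in> Arr C \<Longrightarrow> g \<in> Arr C \<Longrightarrow> Dom C f = Dom C g \<Longrightarrow>
    X = Cod C f \<Longrightarrow> Y = Cod C g \<Longrightarrow> Comp C (Pair C f g) (Pi0 C X Y) = f"
  and pair_pi1[simp]: "f \<in> Arr C \<Longrightarrow> g \<in> Arr C \<Longrightarrow> Dom C f = Dom C g \<Longrightarrow>
    X = Cod C f \<Longrightarrow> Y = Cod C g \<Longrightarrow> Comp C (Pair C f g) (Pi1 C X Y) = g"
  using pair_universal by auto

lemma pair_pi0_comp[simp]: "f \<in> Arr C \<Longrightarrow> g \<in> Arr C \<Longrightarrow> Dom C f = Dom C g \<Longrightarrow>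
    X = Cod C f \<Longrightarrow> Y = Cod C g \<Longrightarrow> h \<in> Arr C \<Longrightarrow> Dom C h = X \<Longrightarrow>
    Comp C (Pair C f g) (Comp C (Pi0 C X Y) h) = Comp C f h"
  and pair_pi1_comp[simp]: "f \<in> Arr C \<Longrightarrow> g \<in> Arr C \<Longrightarrow> Dom C f = Dom C g \<Longrightarrow>
    X = Cod C f \<Longrightarrow> Y = Cod C g \<Longrightarrow> h \<in> Arr C \<Longrightarrow> Dom C h = Y \<Longrightarrow>
    Comp C (Pair C f g) (Comp C (Pi1 C X Y) h) = Comp C g h"
  by (metis comp_assoc pair_pi0 pair_pi1 pi0_arr pi1_arr pi0_cod pi1_cod pi0_dom pi1_dom
      pair_arr pair_cod cod_obj)+

lemma pair_eta: "h \<in> Arr C \<Longrightarrow> X \<in> Obj C \<Longrightarrow> Y \<in> Obj C \<Longrightarrow> Cod C h = Prod C X Y \<Longrightarrow>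
    Pair C (Comp C h (Pi0 C X Y)) (Comp C h (Pi1 C X Y)) = h"
  using chosen_products unfolding has_chosen_products_def Hom_def
  by (metis (mono_tags, lifting) dom_obj mem_Collect_eq)

lemma pair_unique: "h \<in> Arr C \<Longrightarrow> X \<in> Obj C \<Longrightarrow> Y \<in> Obj C \<Longrightarrow> Cod C h = Prod C X Y \<Longrightarrow>
    Comp C h (Pi0 C X Y) = f \<Longrightarrow> Comp C h (Pi1 C X Y) = g \<Longrightarrow> h = Pair C f g"
  using pair_eta by auto

lemma pair_pi0_pi1[simp]: "X \<in> Obj C \<Longrightarrow> Y \<in> Obj C \<Longrightarrow>
    Pair C (Pi0 C X Y) (Pi1 C X Y) = Id C (Prod C X Y)"
  by (rule pair_unique[symmetric]) auto

lemma comp_pair[simp]: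
  assumes "h \<in> Arr C" "f \<in> Arr C" "g \<in> Arr C" "Dom C f = Dom C g" "Cod C h = Dom C f"
  shows "Comp C h (Pair C f g) = Pair C (Comp C h f) (Comp C h g)"
proof (rule pair_unique)
  show "Comp C (Comp C h (Pair C f g)) (Pi0 C (Cod C f) (Cod C g)) = Comp C h f"
    using assms comp_assoc[of h "Pair C f g" "Pi0 C (Cod C f) (Cod C g)"] by simp
  show "Comp C (Comp C h (Pair C f g)) (Pi1 C (Cod C f) (Cod C g)) = Comp C h g"
    using assms comp_assoc[of h "Pair C f g" "Pi1 C (Cod C f) (Cod C g)"] by simp
qed (use assms in simp_all)

lemma comp_pair_comp[simp]:
  assumes "h \<in> Arr C" "f \<in> Arr C" "g \<in> Arr C" "Dom C f = Dom C g" "Cod C h = Dom C f"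
    "k \<in> Arr C" "Dom C k = Prod C (Cod C f) (Cod C g)"
  shows "Comp C h (Comp C (Pair C f g) k) = Comp C (Pair C (Comp C h f) (Comp C h g)) k"
proof -
  have "Comp C (Comp C h (Pair C f g)) k = Comp C h (Comp C (Pair C f g) k)"
    by (rule comp_assoc) (use assms in simp_all)
  then show ?thesis using assms by simp
qed

lemma term_obj[simp]: "Term C \<in> Obj C"
  using chosen_products by (simp add: has_chosen_products_def)

lemma bang_arr[simp]: "X \<in> Obj C \<Longrightarrow> Bang C X \<in> Arr C"
  and bang_dom[simp]: "X \<in> Obj C \<Longrightarrow> Dom C (Bang C X) = X"
  and bang_cod[simp]: "X \<in> Obj C \<Longrightarrow> Cod C (Bang C X) = Term C"
  using chosen_products by (auto simp: has_chosen_products_def Hom_def)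

lemma bang_unique: "h \<in> Arr C \<Longrightarrow> Cod C h = Term C \<Longrightarrow> h = Bang C (Dom C h)"
  using chosen_products unfolding has_chosen_products_def Hom_def by auto

lemma is_terminal_Term: "is_terminal C (Term C)"
  unfolding is_terminal_def
proof (intro conjI ballI term_obj)
  fix Z assume "Z \<in> Obj C"
  then show "\<exists>!h. h \<in> Hom C Z (Term C)"
    by (intro ex1I[of _ "Bang C Z"]) (auto simp: Hom_def dest: bang_unique)
qed

lemma zero_arr[simp]: "X \<in> Obj C \<Longrightarrow> Y \<in> Obj C \<Longrightarrow> Zero C X Y \<in> Arr C"
  and zero_dom[simp]: "X \<in> Obj C \<Longrightarrow> Y \<in> Obj C \<Longrightarrow> Dom C (Zero C X Y) = X"
  and zero_cod[simp]: "X \<in> Obj C \<Longrightarrow> Y \<in> Obj C \<Longrightarrow> Cod C (Zero C X Y) = Y"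
  using left_additive by (auto simp: is_left_additive_def Hom_def)

lemma add_hom_comm:
  assumes "f \<in> Arr C" "g \<in> Arr C" "Dom C f = Dom C g" "Cod C f = Cod C g"
  shows "Add C f g \<in> Hom C (Dom C f) (Cod C f) \<and> Add C f g = Add C g f"
proof -
  have "f \<in> Hom C (Dom C f) (Cod C f)" "g \<in> Hom C (Dom C f) (Cod C f)"
    using assms by (auto simp: Hom_def)
  then show ?thesis
    using left_additive assms unfolding is_left_additive_def by (meson cod_obj dom_obj)
qed

lemma add_arr[simp]: "f \<in> Arr C \<Longrightarrow> g \<in> Arr C \<Longrightarrow> Dom C f = Dom C g \<Longrightarrow> Cod C f = Cod C g \<Longrightarrow>
    Add C f g \<in> Arr C"
  and add_dom[simp]: "f \<in> Arr C \<Longrightarrow> g \<in> Arr C \<Longrightarrow> Dom C f = Dom C g \<Longrightarrow> Cod C f = Cod C g \<Longrightarrow>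
    Dom C (Add C f g) = Dom C f"
  and add_cod[simp]: "f \<in> Arr C \<Longrightarrow> g \<in> Arr C \<Longrightarrow> Dom C f = Dom C g \<Longrightarrow> Cod C f = Cod C g \<Longrightarrow>
    Cod C (Add C f g) = Cod C f"
  and add_comm: "f \<in> Arr C \<Longrightarrow> g \<in> Arr C \<Longrightarrow> Dom C f = Dom C g \<Longrightarrow> Cod C f = Cod C g \<Longrightarrow>
    Add C f g = Add C g f"
  using add_hom_comm by (auto simp: Hom_def)

lemma add_assoc:
  assumes "f \<in> Arr C" "g \<in> Arr C" "h \<in> Arr C" "Dom C f = Dom C g" "Cod C f = Cod C g"
    "Dom C h = Dom C f" "Cod C h = Cod C f"
  shows "Add C (Add C f g) h = Add C f (Add C g h)"
proof -
  have "f \<in> Hom C (Dom C f) (Cod C f)" "g \<in> Hom C (Dom C f) (Cod C f)"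
    "h \<in> Hom C (Dom C f) (Cod C f)"
    using assms by (auto simp: Hom_def)
  then show ?thesis
    using left_additive assms unfolding is_left_additive_def by (meson cod_obj dom_obj)
qed

lemma add_left_commute: "f \<in> Arr C \<Longrightarrow> g \<in> Arr C \<Longrightarrow> h \<in> Arr C \<Longrightarrow> Dom C f = Dom C g \<Longrightarrow>
    Cod C f = Cod C g \<Longrightarrow> Dom C h = Dom C f \<Longrightarrow> Cod C h = Cod C f \<Longrightarrow>
    Add C f (Add C g h) = Add C g (Add C f h)"
  by (metis add_assoc add_comm)

lemma add_interchange: "a \<in> Arr C \<Longrightarrow> b \<in> Arr C \<Longrightarrow> c \<in> Arr C \<Longrightarrow> d \<in> Arr C \<Longrightarrow>
    Dom C b = Dom C a \<Longrightarrow> Dom C c = Dom C a \<Longrightarrow> Dom C d = Dom C a \<Longrightarrow>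
    Cod C b = Cod C a \<Longrightarrow> Cod C c = Cod C a \<Longrightarrow> Cod C d = Cod C a \<Longrightarrow>
    Add C (Add C a b) (Add C c d) = Add C (Add C a c) (Add C b d)"
  by (simp add: add_assoc add_left_commute[of b c d])

lemma add_zero[simp]: "f \<in> Arr C \<Longrightarrow> X = Dom C f \<Longrightarrow> Y = Cod C f \<Longrightarrow> Add C f (Zero C X Y) = f"
proof -
  assume "f \<in> Arr C" "X = Dom C f" "Y = Cod C f"
  moreover from this have "f \<in> Hom C X Y" by (simp add: Hom_def)
  ultimately show ?thesis
    using left_additive unfolding is_left_additive_def by (meson cod_obj dom_obj)
qed

lemma zero_add[simp]: "f \<in> Arr C \<Longrightarrow> X = Dom C f \<Longrightarrow> Y = Cod C f \<Longrightarrow> Add C (Zero C X Y) f = f"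
  by (metis add_comm add_zero zero_arr zero_dom zero_cod dom_obj cod_obj)

lemma comp_add[simp]: "f \<in> Arr C \<Longrightarrow> g \<in> Arr C \<Longrightarrow> h \<in> Arr C \<Longrightarrow> Cod C f = Dom C g \<Longrightarrow>
    Dom C g = Dom C h \<Longrightarrow> Cod C g = Cod C h \<Longrightarrow>
    Comp C f (Add C g h) = Add C (Comp C f g) (Comp C f h)"
proof -
  assume "f \<in> Arr C" "g \<in> Arr C" "h \<in> Arr C" "Cod C f = Dom C g" "Dom C g = Dom C h"
    "Cod C g = Cod C h"
  then have "f \<in> Hom C (Dom C f) (Dom C g)" "g \<in> Hom C (Dom C g) (Cod C g)"
    "h \<in> Hom C (Dom C g) (Cod C g)"
    by (auto simp: Hom_def)
  then show ?thesis using left_additive unfolding is_left_additive_def by blast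
qed

lemma comp_zero[simp]: "f \<in> Arr C \<Longrightarrow> X = Cod C f \<Longrightarrow> Y \<in> Obj C \<Longrightarrow>
    Comp C f (Zero C X Y) = Zero C (Dom C f) Y"
proof -
  assume "f \<in> Arr C" "X = Cod C f" "Y \<in> Obj C"
  moreover from this have "f \<in> Hom C (Dom C f) X" by (auto simp: Hom_def)
  ultimately show ?thesis using left_additive unfolding is_left_additive_def by blast
qed

lemma comp_add_comp[simp]:
  assumes "f \<in> Arr C" "g \<in> Arr C" "h \<in> Arr C" "Cod C f = Dom C g" "Dom C g = Dom C h"
    "Cod C g = Cod C h" "k \<in> Arr C" "Dom C k = Cod C g"
  shows "Comp C f (Comp C (Add C g h) k) = Comp C (Add C (Comp C f g) (Comp C f h)) k"
proof -
  have "Comp C (Comp C f (Add C g h)) k = Comp C f (Comp C (Add C g h) k)"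
    by (rule comp_assoc) (use assms in simp_all)
  then show ?thesis using assms by simp
qed

lemma comp_zero_comp[simp]:
  assumes "f \<in> Arr C" "X = Cod C f" "Y \<in> Obj C" "k \<in> Arr C" "Dom C k = Y"
  shows "Comp C f (Comp C (Zero C X Y) k) = Comp C (Zero C (Dom C f) Y) k"
proof -
  have "Comp C (Comp C f (Zero C X Y)) k = Comp C f (Comp C (Zero C X Y) k)"
    by (rule comp_assoc) (use assms in simp_all)
  then show ?thesis using assms by simp
qed

lemma additive_mapI:
  assumes "\<And>Z x y. Z \<in> Obj C \<Longrightarrow> x \<in> Arr C \<Longrightarrow> y \<in> Arr C \<Longrightarrow> Dom C x = Z \<Longrightarrow> Dom C y = Z \<Longrightarrow>
      Cod C x = Dom C h \<Longrightarrow> Cod C y = Dom C h \<Longrightarrow>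
      Comp C (Add C x y) h = Add C (Comp C x h) (Comp C y h)"
    "\<And>Z. Z \<in> Obj C \<Longrightarrow> Comp C (Zero C Z (Dom C h)) h = Zero C Z (Cod C h)"
  shows "additive_map C h"
  unfolding additive_map_def Hom_def using assms by auto

lemma additive_mapD_add:
  assumes "additive_map C h" "x \<in> Arr C" "y \<in> Arr C" "Cod C x = Dom C h"
    "Dom C y = Dom C x" "Cod C y = Dom C h"
  shows "Comp C (Add C x y) h = Add C (Comp C x h) (Comp C y h)"
proof -
  have "x \<in> Hom C (Dom C x) (Dom C h)" "y \<in> Hom C (Dom C x) (Dom C h)" "Dom C x \<in> Obj C"
    using assms by (auto simp: Hom_def)
  then show ?thesis using assms(1) unfolding additive_map_def by blast
qed

lemma additive_mapD_zero:
  "additive_map C h \<Longrightarrow> Z \<in> Obj C \<Longrightarrow> X = Dom C h \<Longrightarrow> Comp C (Zero C Z X) h = Zero C Z (Cod C h)"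
  unfolding additive_map_def by blast

lemma additive_map_pi0: "X \<in> Obj C \<Longrightarrow> Y \<in> Obj C \<Longrightarrow> additive_map C (Pi0 C X Y)"
  and additive_map_pi1: "X \<in> Obj C \<Longrightarrow> Y \<in> Obj C \<Longrightarrow> additive_map C (Pi1 C X Y)"
  using cla by (auto simp: is_cla_def)

lemma add_comp_pi0[simp]: "x \<in> Arr C \<Longrightarrow> y \<in> Arr C \<Longrightarrow> X \<in> Obj C \<Longrightarrow> Y \<in> Obj C \<Longrightarrow>
    Cod C x = Prod C X Y \<Longrightarrow> Dom C y = Dom C x \<Longrightarrow> Cod C y = Prod C X Y \<Longrightarrow>
    Comp C (Add C x y) (Pi0 C X Y) = Add C (Comp C x (Pi0 C X Y)) (Comp C y (Pi0 C X Y))"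
  and add_comp_pi1[simp]: "x \<in> Arr C \<Longrightarrow> y \<in> Arr C \<Longrightarrow> X \<in> Obj C \<Longrightarrow> Y \<in> Obj C \<Longrightarrow>
    Cod C x = Prod C X Y \<Longrightarrow> Dom C y = Dom C x \<Longrightarrow> Cod C y = Prod C X Y \<Longrightarrow>
    Comp C (Add C x y) (Pi1 C X Y) = Add C (Comp C x (Pi1 C X Y)) (Comp C y (Pi1 C X Y))"
  by (rule additive_mapD_add; simp add: additive_map_pi0 additive_map_pi1)+

lemma zero_comp_pi0[simp]: "Z \<in> Obj C \<Longrightarrow> X \<in> Obj C \<Longrightarrow> Y \<in> Obj C \<Longrightarrow> P = Prod C X Y \<Longrightarrow>
    Comp C (Zero C Z P) (Pi0 C X Y) = Zero C Z X"
  and zero_comp_pi1[simp]: "Z \<in> Obj C \<Longrightarrow> X \<in> Obj C \<Longrightarrow> Y \<in> Obj C \<Longrightarrow> P = Prod C X Y \<Longrightarrow>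
    Comp C (Zero C Z P) (Pi1 C X Y) = Zero C Z Y"
  using additive_mapD_zero[OF additive_map_pi0] additive_mapD_zero[OF additive_map_pi1] by simp_all

lemma add_pair: "f \<in> Arr C \<Longrightarrow> g \<in> Arr C \<Longrightarrow> h \<in> Arr C \<Longrightarrow> k \<in> Arr C \<Longrightarrow>
    Dom C f = Dom C g \<Longrightarrow> Dom C h = Dom C f \<Longrightarrow> Dom C k = Dom C f \<Longrightarrow>
    Cod C h = Cod C f \<Longrightarrow> Cod C k = Cod C g \<Longrightarrow>
    Add C (Pair C f g) (Pair C h k) = Pair C (Add C f h) (Add C g k)"
  by (rule pair_unique[of _ "Cod C f" "Cod C g"]) simp_all

lemma zero_prod: "Z \<in> Obj C \<Longrightarrow> X \<in> Obj C \<Longrightarrow> Y \<in> Obj C \<Longrightarrow>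
    Zero C Z (Prod C X Y) = Pair C (Zero C Z X) (Zero C Z Y)"
  by (rule pair_unique[of _ X Y]) simp_all

lemma additive_map_pair:
  assumes "additive_map C f" "additive_map C g" "f \<in> Arr C" "g \<in> Arr C" "Dom C f = Dom C g"
  shows "additive_map C (Pair C f g)"
proof (rule additive_mapI)
  fix Z x y assume xy: "Z \<in> Obj C" "x \<in> Arr C" "y \<in> Arr C" "Dom C x = Z" "Dom C y = Z"
      "Cod C x = Dom C (Pair C f g)" "Cod C y = Dom C (Pair C f g)"
  have "Comp C (Add C x y) f = Add C (Comp C x f) (Comp C y f)"
    by (rule additive_mapD_add) (use xy assms in simp_all)
  moreover have "Comp C (Add C x y) g = Add C (Comp C x g) (Comp C y g)"
    by (rule additive_mapD_add) (use xy assms in simp_all)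
  ultimately show "Comp C (Add C x y) (Pair C f g) =
      Add C (Comp C x (Pair C f g)) (Comp C y (Pair C f g))"
    using xy assms by (simp add: add_pair)
next
  fix Z assume Z: "Z \<in> Obj C"
  have "Comp C (Zero C Z (Dom C f)) f = Zero C Z (Cod C f)"
    by (rule additive_mapD_zero) (use Z assms in simp_all)
  moreover have "Comp C (Zero C Z (Dom C g)) g = Zero C Z (Cod C g)"
    by (rule additive_mapD_zero) (use Z assms in simp_all)
  ultimately show
      "Comp C (Zero C Z (Dom C (Pair C f g))) (Pair C f g) = Zero C Z (Cod C (Pair C f g))"
    using Z assms by (simp add: zero_prod)
qed

lemma additive_map_split:
  assumes "W \<in> Obj C" "X \<in> Obj C" "Y \<in> Obj C" "additive_map C k" "k \<in> Arr C" "Dom C k = Prod C X Y"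
  defines "p \<equiv> Pi1 C W (Prod C X Y)" and "P \<equiv> Prod C W (Prod C X Y)"
  shows "Add C (Comp C (Pair C (Comp C p (Pi0 C X Y)) (Zero C P Y)) k)
               (Comp C (Pair C (Zero C P X) (Comp C p (Pi1 C X Y))) k) = Comp C p k"
proof -
  have "Add C (Comp C (Pair C (Comp C p (Pi0 C X Y)) (Zero C P Y)) k)
               (Comp C (Pair C (Zero C P X) (Comp C p (Pi1 C X Y))) k)
     = Comp C (Add C (Pair C (Comp C p (Pi0 C X Y)) (Zero C P Y))
               (Pair C (Zero C P X) (Comp C p (Pi1 C X Y)))) k"
    by (rule additive_mapD_add[symmetric]) (use assms in simp_all)
  also have "\<dots> = Comp C p k"
    using assms by (simp add: add_pair pair_eta)
  finally show ?thesis .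
qed

lemma additive_sndD_add[simp]:
  assumes "additive_snd C (Cod C x) (Cod C a1) f" "x \<in> Arr C" "a1 \<in> Arr C" "a2 \<in> Arr C"
    "Dom C a1 = Dom C x" "Dom C a2 = Dom C x" "Cod C a2 = Cod C a1"
  shows "Comp C (Pair C x (Add C a1 a2)) f =
    Add C (Comp C (Pair C x a1) f) (Comp C (Pair C x a2) f)"
proof -
  have "x \<in> Hom C (Dom C x) (Cod C x)" "a1 \<in> Hom C (Dom C x) (Cod C a1)"
    "a2 \<in> Hom C (Dom C x) (Cod C a1)" "Dom C x \<in> Obj C"
    using assms by (auto simp: Hom_def)
  then show ?thesis using assms(1) unfolding additive_snd_def by blast
qed

lemma additive_sndD_zero[simp]:
  assumes "additive_snd C (Cod C x) A f" "x \<in> Arr C" "Z = Dom C x"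
  shows "Comp C (Pair C x (Zero C Z A)) f = Zero C Z (Cod C f)"
proof -
  have "x \<in> Hom C (Dom C x) (Cod C x)" "Dom C x \<in> Obj C" using assms by (auto simp: Hom_def)
  then show ?thesis using assms unfolding additive_snd_def by blast
qed

lemma additive_snd_zero_map:
  "X \<in> Obj C \<Longrightarrow> A \<in> Obj C \<Longrightarrow> B \<in> Obj C \<Longrightarrow> additive_snd C X A (Zero C (Prod C X A) B)"
  unfolding additive_snd_def by (auto simp: Hom_def)

lemma additive_snd_add_map:
  assumes "f \<in> Arr C" "g \<in> Arr C" "Dom C f = Prod C X A" "Dom C g = Prod C X A" "Cod C g = Cod C f"
    "X \<in> Obj C" "A \<in> Obj C" "additive_snd C X A f" "additive_snd C X A g"
  shows "additive_snd C X A (Add C f g)"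
  unfolding additive_snd_def
proof (intro conjI ballI)
  fix W x a1 a2 assume "W \<in> Obj C" "x \<in> Hom C W X" "a1 \<in> Hom C W A" "a2 \<in> Hom C W A"
  then show "Comp C (Pair C x (Add C a1 a2)) (Add C f g) =
      Add C (Comp C (Pair C x a1) (Add C f g)) (Comp C (Pair C x a2) (Add C f g))"
    using assms by (simp add: Hom_def add_interchange)
next
  fix W x assume "W \<in> Obj C" "x \<in> Hom C W X"
  then show "Comp C (Pair C x (Zero C W A)) (Add C f g) = Zero C W (Cod C (Add C f g))"
    using assms by (simp add: Hom_def)
qed

lemma additive_snd_pi1_comp:
  "X \<in> Obj C \<Longrightarrow> A \<in> Obj C \<Longrightarrow> additive_map C k \<Longrightarrow> k \<in> Arr C \<Longrightarrow> Dom C k = A \<Longrightarrow>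
    additive_snd C X A (Comp C (Pi1 C X A) k)"
  unfolding additive_snd_def Hom_def by (auto intro: additive_mapD_add additive_mapD_zero)

lemma additive_snd_split:
  assumes "Z \<in> Obj C" "B \<in> Obj C" "B' \<in> Obj C" "fs \<in> Arr C" "Dom C fs = Prod C Z (Prod C B B')"
    "additive_snd C Z (Prod C B B') fs"
  defines "p0 \<equiv> Pi0 C Z (Prod C B B')" and "p1 \<equiv> Pi1 C Z (Prod C B B')"
    and "P \<equiv> Prod C Z (Prod C B B')"
  shows "Add C (Comp C (Pair C p0 (Pair C (Comp C p1 (Pi0 C B B')) (Zero C P B'))) fs)
            (Comp C (Pair C p0 (Pair C (Zero C P B) (Comp C p1 (Pi1 C B B')))) fs) = fs"
proof -
  have "Add C (Comp C (Pair C p0 (Pair C (Comp C p1 (Pi0 C B B')) (Zero C P B'))) fs)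
            (Comp C (Pair C p0 (Pair C (Zero C P B) (Comp C p1 (Pi1 C B B')))) fs)
       = Comp C (Pair C p0 (Add C (Pair C (Comp C p1 (Pi0 C B B')) (Zero C P B'))
                                  (Pair C (Zero C P B) (Comp C p1 (Pi1 C B B'))))) fs"
    by (rule additive_sndD_add[symmetric]) (use assms in simp_all)
  also have "\<dots> = fs" using assms by (simp add: add_pair pair_eta)
  finally show ?thesis .
qed

lemma iso_inv_is_inverse:
  assumes "is_iso C f"
  shows "iso_inv C f \<in> Arr C" "Dom C (iso_inv C f) = Cod C f" "Cod C (iso_inv C f) = Dom C f"
    "Comp C f (iso_inv C f) = Id C (Dom C f)" "Comp C (iso_inv C f) f = Id C (Cod C f)"
proof -
  from assms obtain g where "g \<in> Hom C (Cod C f) (Dom C f) \<and>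
        Comp C f g = Id C (Dom C f) \<and> Comp C g f = Id C (Cod C f)"
    unfolding is_iso_def by blast
  then have "iso_inv C f \<in> Hom C (Cod C f) (Dom C f) \<and>
        Comp C f (iso_inv C f) = Id C (Dom C f) \<and> Comp C (iso_inv C f) f = Id C (Cod C f)"
    unfolding iso_inv_def by (rule someI)
  then show "iso_inv C f \<in> Arr C" "Dom C (iso_inv C f) = Cod C f" "Cod C (iso_inv C f) = Dom C f"
    "Comp C f (iso_inv C f) = Id C (Dom C f)" "Comp C (iso_inv C f) f = Id C (Cod C f)"
    by (auto simp: Hom_def)
qed

lemma iso_inv_unique:
  assumes "is_iso C f" "g \<in> Arr C" "Dom C g = Cod C f" "Cod C g = Dom C f"
    "Comp C f g = Id C (Dom C f)" "Comp C g f = Id C (Cod C f)"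
  shows "iso_inv C f = g"
proof -
  have f: "f \<in> Arr C" using assms(1) by (simp add: is_iso_def)
  note i = iso_inv_is_inverse[OF assms(1)]
  have "iso_inv C f = Comp C (Id C (Cod C f)) (iso_inv C f)"
    using i f by simp
  also have "\<dots> = Comp C (Comp C g f) (iso_inv C f)" using assms by simp
  also have "\<dots> = Comp C g (Comp C f (iso_inv C f))"
    by (rule comp_assoc) (use i f assms in simp_all)
  also have "\<dots> = g" using i f assms by simp
  finally show ?thesis .
qed

lemma is_iso_id: "X \<in> Obj C \<Longrightarrow> is_iso C (Id C X)"
  unfolding is_iso_def by (rule conjI, simp, rule bexI[of _ "Id C X"]) (simp_all add: Hom_def)

lemma additive_map_iso_inv:
  assumes "is_iso C f" "additive_map C f"
  shows "additive_map C (iso_inv C f)"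
proof -
  have f: "f \<in> Arr C" using assms(1) by (simp add: is_iso_def)
  note i = iso_inv_is_inverse[OF assms(1)]
  let ?g = "iso_inv C f"
  have cancel: "Comp C (Comp C u f) ?g = u" if "u \<in> Arr C" "Cod C u = Dom C f" for u
    using that i f by (subst comp_assoc) simp_all
  show ?thesis
  proof (rule additive_mapI)
    fix Z x y assume xy: "Z \<in> Obj C" "x \<in> Arr C" "y \<in> Arr C" "Dom C x = Z" "Dom C y = Z"
      "Cod C x = Dom C ?g" "Cod C y = Dom C ?g"
    have "Comp C (Add C (Comp C x ?g) (Comp C y ?g)) f =
        Add C (Comp C (Comp C x ?g) f) (Comp C (Comp C y ?g) f)"
      by (rule additive_mapD_add) (use xy assms i f in simp_all)
    also have "\<dots> = Add C x y" using xy i f by simp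
    finally have "Comp C (Comp C (Add C (Comp C x ?g) (Comp C y ?g)) f) ?g = Comp C (Add C x y) ?g"
      by simp
    then show "Comp C (Add C x y) ?g = Add C (Comp C x ?g) (Comp C y ?g)"
      using cancel[of "Add C (Comp C x ?g) (Comp C y ?g)"] xy i f by simp
  next
    fix Z assume Z: "Z \<in> Obj C"
    have "Comp C (Zero C Z (Dom C f)) f = Zero C Z (Cod C f)"
      by (rule additive_mapD_zero) (use Z assms f in simp_all)
    then have "Comp C (Comp C (Zero C Z (Dom C f)) f) ?g = Comp C (Zero C Z (Cod C f)) ?g" by simp
    then show "Comp C (Zero C Z (Dom C ?g)) ?g = Zero C Z (Cod C ?g)"
      using cancel[of "Zero C Z (Dom C f)"] Z i f by simp
  qed
qed

end

section \<open>The category of additive lenses\<close>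

context cla_category
begin

abbreviation L where "L \<equiv> LensA C"

lemma LensA_Obj: "Obj L = Obj C \<times> Obj C"
  by (simp add: LensA_def)

lemma LensA_Arr: "((A, A'), (B, B'), f, fs) \<in> Arr L \<longleftrightarrow>
    A \<in> Obj C \<and> A' \<in> Obj C \<and> B \<in> Obj C \<and> B' \<in> Obj C \<and>
    f \<in> Hom C A B \<and> fs \<in> Hom C (Prod C A B') A' \<and> additive_snd C A B' fs"
  by (simp add: LensA_def)

lemma LensA_Dom[simp]: "Dom L ((A, A'), (B, B'), f, fs) = (A, A')"
  and LensA_Cod[simp]: "Cod L ((A, A'), (B, B'), f, fs) = (B, B')"
  and LensA_Id[simp]: "Id L (A, A') = ((A, A'), (A, A'), Id C A, Pi1 C A A')"
  and LensA_Prod[simp]: "Prod L (A, A') (B, B') = (Prod C A B, Prod C A' B')"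
  and LensA_Term[simp]: "Term L = (Term C, Term C)"
  and LensA_Bang[simp]:
    "Bang L (A, A') = ((A, A'), (Term C, Term C), Bang C A, Zero C (Prod C A (Term C)) A')"
  and LensA_Zero[simp]:
    "Zero L (A, A') (B, B') = ((A, A'), (B, B'), Zero C A B, Zero C (Prod C A B') A')"
  and LensA_Pi0[simp]: "Pi0 L (A, A') (B, B') = ((Prod C A B, Prod C A' B'), (A, A'), Pi0 C A B,
    Pair C (Pi1 C (Prod C A B) A') (Zero C (Prod C (Prod C A B) A') B'))"
  and LensA_Pi1[simp]: "Pi1 L (A, A') (B, B') = ((Prod C A B, Prod C A' B'), (B, B'), Pi1 C A B,
    Pair C (Zero C (Prod C (Prod C A B) B') A') (Pi1 C (Prod C A B) B'))"
  and LensA_Add[simp]: "Add L ((A, A'), (B, B'), f, fs) ((A2, A2'), (B2, B2'), g, gs) =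
    ((A, A'), (B, B'), Add C f g, Add C fs gs)"
  by (simp_all add: LensA_def lens_dom_def lens_cod_def lens_fwd_def lens_bwd_def)

lemma LensA_Comp[simp]: "Comp L ((A, A'), (B, B'), f, fs) ((B2, B2'), (E, E'), g, gs) =
    ((A, A'), (E, E'), Comp C f g,
     Comp C (Pair C (Pi0 C A E') (Comp C (Pair C (Comp C (Pi0 C A E') f) (Pi1 C A E')) gs)) fs)"
  and LensA_Pair[simp]: "Pair L ((Z, Z'), (A, A'), f, fs) ((Z2, Z2'), (B, B'), g, gs) =
    ((Z, Z'), (Prod C A B, Prod C A' B'), Pair C f g,
     Add C
      (Comp C (Pair C (Pi0 C Z (Prod C A' B')) (Comp C (Pi1 C Z (Prod C A' B')) (Pi0 C A' B'))) fs)
      (Comp C (Pair C (Pi0 C Z (Prod C A' B')) (Comp C (Pi1 C Z (Prod C A' B')) (Pi1 C A' B'))) gs))"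
  by (simp_all add: LensA_def lens_dom_def lens_cod_def lens_fwd_def lens_bwd_def Let_def)

lemma LensA_hom: "l \<in> Hom L (A, A') (B, B') \<longleftrightarrow> (\<exists>f fs. l = ((A, A'), (B, B'), f, fs) \<and>
    A \<in> Obj C \<and> A' \<in> Obj C \<and> B \<in> Obj C \<and> B' \<in> Obj C \<and>
    f \<in> Arr C \<and> Dom C f = A \<and> Cod C f = B \<and>
    fs \<in> Arr C \<and> Dom C fs = Prod C A B' \<and> Cod C fs = A' \<and> additive_snd C A B' fs)"
  by (cases l) (auto simp: Hom_def LensA_Arr LensA_def lens_dom_def lens_cod_def)

lemma LensA_ArrE:
  assumes "l \<in> Arr L"
  obtains A A' B B' f fs where "l = ((A, A'), (B, B'), f, fs)"
    "A \<in> Obj C" "A' \<in> Obj C" "B \<in> Obj C" "B' \<in> Obj C"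
    "f \<in> Arr C" "Dom C f = A" "Cod C f = B"
    "fs \<in> Arr C" "Dom C fs = Prod C A B'" "Cod C fs = A'" "additive_snd C A B' fs"
  using assms by (cases l) (auto simp: LensA_Arr Hom_def)

lemma additive_snd_lens_comp:
  assumes "A \<in> Obj C" "A' \<in> Obj C" "B \<in> Obj C" "B' \<in> Obj C" "E \<in> Obj C" "E' \<in> Obj C"
    "f \<in> Arr C" "Dom C f = A" "Cod C f = B"
    "fs \<in> Arr C" "Dom C fs = Prod C A B'" "Cod C fs = A'" "additive_snd C A B' fs"
    "gs \<in> Arr C" "Dom C gs = Prod C B E'" "Cod C gs = B'" "additive_snd C B E' gs"
  shows "additive_snd C A E'
    (Comp C (Pair C (Pi0 C A E') (Comp C (Pair C (Comp C (Pi0 C A E') f) (Pi1 C A E')) gs)) fs)"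
  unfolding additive_snd_def using assms by (auto simp: Hom_def)

lemma additive_snd_lens_pair:
  assumes "Z \<in> Obj C" "Z' \<in> Obj C" "A' \<in> Obj C" "B' \<in> Obj C"
    "fs \<in> Arr C" "Dom C fs = Prod C Z A'" "Cod C fs = Z'" "additive_snd C Z A' fs"
    "gs \<in> Arr C" "Dom C gs = Prod C Z B'" "Cod C gs = Z'" "additive_snd C Z B' gs"
  defines "P \<equiv> Prod C A' B'"
  shows "additive_snd C Z P
    (Add C (Comp C (Pair C (Pi0 C Z P) (Comp C (Pi1 C Z P) (Pi0 C A' B'))) fs)
           (Comp C (Pair C (Pi0 C Z P) (Comp C (Pi1 C Z P) (Pi1 C A' B'))) gs))"
  unfolding additive_snd_def Hom_def using assms by (auto simp: add_interchange)

lemma LensA_comp_hom: "l \<in> Hom L X Y \<Longrightarrow> k \<in> Hom L Y Z \<Longrightarrow> Comp L l k \<in> Hom L X Z"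
  by (cases X; cases Y; cases Z)
    (clarsimp simp: LensA_hom LensA_Obj, (rule additive_snd_lens_comp; simp))

lemma LensA_dom_cod_obj: "l \<in> Arr L \<Longrightarrow> Dom L l \<in> Obj L \<and> Cod L l \<in> Obj L"
  by (erule LensA_ArrE) (simp add: LensA_Obj)

lemma LensA_id_hom: "X \<in> Obj L \<Longrightarrow> Id L X \<in> Hom L X X"
  by (cases X) (auto simp: Hom_def LensA_Arr LensA_Obj additive_snd_def)

lemma LensA_id_comp: "l \<in> Hom L X Y \<Longrightarrow> Comp L (Id L X) l = l"
  and LensA_comp_id: "l \<in> Hom L X Y \<Longrightarrow> Comp L l (Id L Y) = l"
  by (cases X; cases Y; clarsimp simp: LensA_hom LensA_Obj)+

lemma LensA_comp_assoc: "l \<in> Hom L W X \<Longrightarrow> k \<in> Hom L X Y \<Longrightarrow> m \<in> Hom L Y Z \<Longrightarrow>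
    Comp L (Comp L l k) m = Comp L l (Comp L k m)"
  by (cases W; cases X; cases Y; cases Z) (clarsimp simp: LensA_hom LensA_Obj)

lemma is_category_LensA: "is_category L"
  unfolding is_category_def
  using LensA_dom_cod_obj LensA_id_hom LensA_comp_hom LensA_id_comp LensA_comp_id LensA_comp_assoc
  by blast

lemma LensA_pi0_hom: "X \<in> Obj L \<Longrightarrow> Y \<in> Obj L \<Longrightarrow> Pi0 L X Y \<in> Hom L (Prod L X Y) X"
  and LensA_pi1_hom: "X \<in> Obj L \<Longrightarrow> Y \<in> Obj L \<Longrightarrow> Pi1 L X Y \<in> Hom L (Prod L X Y) Y"
  by (cases X; cases Y; auto simp: Hom_def LensA_Arr LensA_Obj additive_snd_def add_pair zero_prod)+

lemma LensA_pair_hom: "l \<in> Hom L Z X \<Longrightarrow> k \<in> Hom L Z Y \<Longrightarrow> Pair L l k \<in> Hom L Z (Prod L X Y)"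
  by (cases X; cases Y; cases Z)
    (clarsimp simp: LensA_hom LensA_Obj, (rule additive_snd_lens_pair; simp))

lemma LensA_pair_pi0: "l \<in> Hom L Z X \<Longrightarrow> k \<in> Hom L Z Y \<Longrightarrow> Comp L (Pair L l k) (Pi0 L X Y) = l"
  and LensA_pair_pi1: "l \<in> Hom L Z X \<Longrightarrow> k \<in> Hom L Z Y \<Longrightarrow> Comp L (Pair L l k) (Pi1 L X Y) = k"
  by (cases X; cases Y; cases Z; clarsimp simp: LensA_hom LensA_Obj)+

lemma LensA_pair_eta: "X \<in> Obj L \<Longrightarrow> Y \<in> Obj L \<Longrightarrow> h \<in> Hom L Z (Prod L X Y) \<Longrightarrow>
    Pair L (Comp L h (Pi0 L X Y)) (Comp L h (Pi1 L X Y)) = h"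
  by (cases X; cases Y; cases Z) (clarsimp simp: LensA_hom LensA_Obj pair_eta additive_snd_split)

lemma LensA_zero_hom: "X \<in> Obj L \<Longrightarrow> Y \<in> Obj L \<Longrightarrow> Zero L X Y \<in> Hom L X Y"
  by (cases X; cases Y) (auto simp: Hom_def LensA_Arr LensA_Obj additive_snd_zero_map)

lemma LensA_bang_hom: "X \<in> Obj L \<Longrightarrow> Bang L X \<in> Hom L X (Term L)"
  by (cases X) (auto simp: Hom_def LensA_Arr LensA_Obj additive_snd_zero_map)

lemma is_terminal_LensA:
  assumes T: "is_terminal C T"
  shows "is_terminal L (T, T)"
proof -
  have T_obj: "T \<in> Obj C" using T by (simp add: is_terminal_def)
  have into_T_unique: "u = v"
    if "u \<in> Arr C" "v \<in> Arr C" "Dom C u = Dom C v" "Cod C u = T" "Cod C v = T" for u v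
  proof -
    have "\<exists>!h. h \<in> Hom C (Dom C u) T" using T that by (simp add: is_terminal_def)
    then show ?thesis using that by (auto simp: Hom_def)
  qed
  show ?thesis unfolding is_terminal_def
  proof (intro conjI ballI)
    show "(T, T) \<in> Obj L" using T_obj by (simp add: LensA_Obj)
    fix Z assume Z: "Z \<in> Obj L"
    then obtain Z0 Z1 where Z_def: "Z = (Z0, Z1)" "Z0 \<in> Obj C" "Z1 \<in> Obj C"
      by (auto simp: LensA_Obj)
    show "\<exists>!h. h \<in> Hom L Z (T, T)"
    proof (rule ex1I)
      show "Zero L Z (T, T) \<in> Hom L Z (T, T)" using Z T_obj by (simp add: LensA_zero_hom LensA_Obj)
      fix h assume "h \<in> Hom L Z (T, T)"
      then obtain f fs where h: "h = ((Z0, Z1), (T, T), f, fs)"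
        "f \<in> Arr C" "Dom C f = Z0" "Cod C f = T"
        "fs \<in> Arr C" "Dom C fs = Prod C Z0 T" "Cod C fs = Z1" "additive_snd C Z0 T fs"
        by (auto simp: Z_def LensA_hom)
      have f: "f = Zero C Z0 T" using h Z_def T_obj by (intro into_T_unique) simp_all
      have "Pi1 C Z0 T = Zero C (Prod C Z0 T) T" using Z_def T_obj by (intro into_T_unique) simp_all
      then have "fs = Comp C (Pair C (Pi0 C Z0 T) (Zero C (Prod C Z0 T) T)) fs"
        using h Z_def T_obj pair_pi0_pi1[of Z0 T] by simp
      also have "\<dots> = Zero C (Prod C Z0 T) Z1"
        using h Z_def T_obj by (subst additive_sndD_zero) simp_all
      finally show "h = Zero L Z (T, T)" using h f Z_def by simp
    qed
  qed
qed

lemma LensA_bang_unique: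
  assumes "h \<in> Hom L X (Term L)"
  shows "h = Bang L X"
proof -
  have X: "X \<in> Obj L" using assms LensA_dom_cod_obj[of h] by (simp add: Hom_def)
  then have "Bang L X \<in> Hom L X (Term L)" by (rule LensA_bang_hom)
  moreover have "\<exists>!h. h \<in> Hom L X (Term L)"
    using is_terminal_LensA[OF is_terminal_Term] X by (simp add: is_terminal_def)
  ultimately show ?thesis using assms by blast
qed

lemma has_chosen_products_LensA: "has_chosen_products L"
  unfolding has_chosen_products_def
  using LensA_pi0_hom LensA_pi1_hom LensA_pair_hom LensA_pair_pi0 LensA_pair_pi1 LensA_pair_eta
    LensA_bang_hom LensA_bang_unique
  by (simp add: LensA_Obj)

lemma LensA_add_hom: "f \<in> Hom L X Y \<Longrightarrow> g \<in> Hom L X Y \<Longrightarrow> Add L f g \<in> Hom L X Y"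
  by (cases X; cases Y) (clarsimp simp: LensA_hom LensA_Obj additive_snd_add_map)

lemma LensA_add_comm: "f \<in> Hom L X Y \<Longrightarrow> g \<in> Hom L X Y \<Longrightarrow> Add L f g = Add L g f"
  by (cases X; cases Y) (clarsimp simp: LensA_hom LensA_Obj add_comm)

lemma LensA_add_assoc: "f \<in> Hom L X Y \<Longrightarrow> g \<in> Hom L X Y \<Longrightarrow> h \<in> Hom L X Y \<Longrightarrow>
    Add L (Add L f g) h = Add L f (Add L g h)"
  by (cases X; cases Y) (clarsimp simp: LensA_hom LensA_Obj add_assoc)

lemma LensA_add_zero: "f \<in> Hom L X Y \<Longrightarrow> Add L f (Zero L X Y) = f"
  by (cases X; cases Y) (clarsimp simp: LensA_hom LensA_Obj)

lemma LensA_comp_add: "f \<in> Hom L W X \<Longrightarrow> g \<in> Hom L X Y \<Longrightarrow> h \<in> Hom L X Y \<Longrightarrow>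
    Comp L f (Add L g h) = Add L (Comp L f g) (Comp L f h)"
  by (cases W; cases X; cases Y) (clarsimp simp: LensA_hom LensA_Obj)

lemma LensA_comp_zero: "f \<in> Hom L W X \<Longrightarrow> Y \<in> Obj L \<Longrightarrow> Comp L f (Zero L X Y) = Zero L W Y"
  by (cases W; cases X; cases Y) (clarsimp simp: LensA_hom LensA_Obj)

lemma is_left_additive_LensA: "is_left_additive L"
  unfolding is_left_additive_def
  by (intro conjI ballI allI impI)
    (simp_all add: LensA_zero_hom LensA_add_hom LensA_add_assoc LensA_add_zero LensA_comp_add
      LensA_comp_zero, simp add: LensA_add_comm)

lemma additive_map_LensA_pi0: "X \<in> Obj L \<Longrightarrow> Y \<in> Obj L \<Longrightarrow> additive_map L (Pi0 L X Y)"
  and additive_map_LensA_pi1: "X \<in> Obj L \<Longrightarrow> Y \<in> Obj L \<Longrightarrow> additive_map L (Pi1 L X Y)"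
  by (cases X; cases Y; clarsimp simp: additive_map_def LensA_Obj; safe;
      clarsimp simp: LensA_hom LensA_Obj)+

theorem is_cla_LensA: "is_cla L"
  unfolding is_cla_def
  using is_category_LensA has_chosen_products_LensA is_left_additive_LensA
    additive_map_LensA_pi0 additive_map_LensA_pi1
  by blast

end

section \<open>Cartesian left-additive functors\<close>

locale cla_functor = C: cla_category C + D: cla_category D
  for C :: "('o, 'a) cla" and D :: "('p, 'b) cla" +
  fixes F :: "('o, 'a, 'p, 'b) cfunctor"
  assumes cla_functor: "is_cla_functor C D F"
begin

abbreviation Fo where "Fo \<equiv> fst F"
abbreviation Fa where "Fa \<equiv> snd F"
abbreviation phi where "phi X Y \<equiv> prod_cmp C D F X Y"
abbreviation psi where "psi X Y \<equiv> iso_inv D (prod_cmp C D F X Y)"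

lemma F_obj[simp]: "X \<in> Obj C \<Longrightarrow> Fo X \<in> Obj D"
  and F_hom: "f \<in> Hom C X Y \<Longrightarrow> Fa f \<in> Hom D (Fo X) (Fo Y)"
  and F_id[simp]: "X \<in> Obj C \<Longrightarrow> Fa (Id C X) = Id D (Fo X)"
  and F_zero[simp]: "X \<in> Obj C \<Longrightarrow> Y \<in> Obj C \<Longrightarrow> Fa (Zero C X Y) = Zero D (Fo X) (Fo Y)"
  and is_iso_phi: "X \<in> Obj C \<Longrightarrow> Y \<in> Obj C \<Longrightarrow> is_iso D (phi X Y)"
  and is_terminal_F_Term: "is_terminal D (Fo (Term C))"
  using cla_functor by (simp_all add: is_cla_functor_def)

lemma F_arr[simp]: "f \<in> Arr C \<Longrightarrow> Fa f \<in> Arr D"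
  and F_dom[simp]: "f \<in> Arr C \<Longrightarrow> Dom D (Fa f) = Fo (Dom C f)"
  and F_cod[simp]: "f \<in> Arr C \<Longrightarrow> Cod D (Fa f) = Fo (Cod C f)"
  using F_hom[of f "Dom C f" "Cod C f"] by (auto simp: Hom_def)

lemma F_comp[simp]: "f \<in> Arr C \<Longrightarrow> g \<in> Arr C \<Longrightarrow> Cod C f = Dom C g \<Longrightarrow>
    Fa (Comp C f g) = Comp D (Fa f) (Fa g)"
  and F_add[simp]: "f \<in> Arr C \<Longrightarrow> g \<in> Arr C \<Longrightarrow> Dom C f = Dom C g \<Longrightarrow> Cod C f = Cod C g \<Longrightarrow>
    Fa (Add C f g) = Add D (Fa f) (Fa g)"
  using cla_functor unfolding is_cla_functor_def Hom_def by blast+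

lemma phi_arr[simp]: "X \<in> Obj C \<Longrightarrow> Y \<in> Obj C \<Longrightarrow> phi X Y \<in> Arr D"
  and phi_dom[simp]: "X \<in> Obj C \<Longrightarrow> Y \<in> Obj C \<Longrightarrow> Dom D (phi X Y) = Fo (Prod C X Y)"
  and phi_cod[simp]: "X \<in> Obj C \<Longrightarrow> Y \<in> Obj C \<Longrightarrow> Cod D (phi X Y) = Prod D (Fo X) (Fo Y)"
  and phi_pi0[simp]: "X \<in> Obj C \<Longrightarrow> Y \<in> Obj C \<Longrightarrow>
    Comp D (phi X Y) (Pi0 D (Fo X) (Fo Y)) = Fa (Pi0 C X Y)"
  and phi_pi1[simp]: "X \<in> Obj C \<Longrightarrow> Y \<in> Obj C \<Longrightarrow>
    Comp D (phi X Y) (Pi1 D (Fo X) (Fo Y)) = Fa (Pi1 C X Y)"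
  by (simp_all add: prod_cmp_def)

lemma psi_arr[simp]: "X \<in> Obj C \<Longrightarrow> Y \<in> Obj C \<Longrightarrow> psi X Y \<in> Arr D"
  and psi_dom[simp]: "X \<in> Obj C \<Longrightarrow> Y \<in> Obj C \<Longrightarrow> Dom D (psi X Y) = Prod D (Fo X) (Fo Y)"
  and psi_cod[simp]: "X \<in> Obj C \<Longrightarrow> Y \<in> Obj C \<Longrightarrow> Cod D (psi X Y) = Fo (Prod C X Y)"
  and phi_psi[simp]: "X \<in> Obj C \<Longrightarrow> Y \<in> Obj C \<Longrightarrow>
    Comp D (phi X Y) (psi X Y) = Id D (Fo (Prod C X Y))"
  and psi_phi[simp]: "X \<in> Obj C \<Longrightarrow> Y \<in> Obj C \<Longrightarrow>
    Comp D (psi X Y) (phi X Y) = Id D (Prod D (Fo X) (Fo Y))"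
  using D.iso_inv_is_inverse[OF is_iso_phi[of X Y]] by simp_all

lemma psi_F_pi0[simp]: "X \<in> Obj C \<Longrightarrow> Y \<in> Obj C \<Longrightarrow>
    Comp D (psi X Y) (Fa (Pi0 C X Y)) = Pi0 D (Fo X) (Fo Y)"
  and psi_F_pi1[simp]: "X \<in> Obj C \<Longrightarrow> Y \<in> Obj C \<Longrightarrow>
    Comp D (psi X Y) (Fa (Pi1 C X Y)) = Pi1 D (Fo X) (Fo Y)"
  by (simp_all flip: phi_pi0 phi_pi1 add: D.comp_assoc[symmetric])

lemma psi_F_pi0_comp[simp]: "X \<in> Obj C \<Longrightarrow> Y \<in> Obj C \<Longrightarrow> k \<in> Arr D \<Longrightarrow> Dom D k = Fo X \<Longrightarrow>
    Comp D (psi X Y) (Comp D (Fa (Pi0 C X Y)) k) = Comp D (Pi0 D (Fo X) (Fo Y)) k"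
  and psi_F_pi1_comp[simp]: "X \<in> Obj C \<Longrightarrow> Y \<in> Obj C \<Longrightarrow> k \<in> Arr D \<Longrightarrow> Dom D k = Fo Y \<Longrightarrow>
    Comp D (psi X Y) (Comp D (Fa (Pi1 C X Y)) k) = Comp D (Pi1 D (Fo X) (Fo Y)) k"
  and phi_psi_comp[simp]: "X \<in> Obj C \<Longrightarrow> Y \<in> Obj C \<Longrightarrow> k \<in> Arr D \<Longrightarrow> Dom D k = Fo (Prod C X Y) \<Longrightarrow>
    Comp D (phi X Y) (Comp D (psi X Y) k) = k"
  and psi_phi_comp[simp]: "X \<in> Obj C \<Longrightarrow> Y \<in> Obj C \<Longrightarrow> k \<in> Arr D \<Longrightarrow>
    Dom D k = Prod D (Fo X) (Fo Y) \<Longrightarrow> Comp D (psi X Y) (Comp D (phi X Y) k) = k"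
  by (subst D.comp_assoc[symmetric]; simp)+

lemma F_pair[simp]:
  assumes "f \<in> Arr C" "g \<in> Arr C" "Dom C f = Dom C g"
  shows "Fa (Pair C f g) = Comp D (Pair D (Fa f) (Fa g)) (psi (Cod C f) (Cod C g))"
proof -
  let ?h = "Fa (Pair C f g)" and ?X = "Cod C f" and ?Y = "Cod C g"
  have "Comp D ?h (phi ?X ?Y) =
      Pair D (Comp D ?h (Fa (Pi0 C ?X ?Y))) (Comp D ?h (Fa (Pi1 C ?X ?Y)))"
    unfolding prod_cmp_def using assms by (subst D.comp_pair) simp_all
  also have "\<dots> = Pair D (Fa f) (Fa g)"
    using assms by (simp flip: F_comp)
  finally have
      "Comp D (Comp D ?h (phi ?X ?Y)) (psi ?X ?Y) = Comp D (Pair D (Fa f) (Fa g)) (psi ?X ?Y)"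
    by simp
  moreover have "Comp D (Comp D ?h (phi ?X ?Y)) (psi ?X ?Y) = ?h"
    using assms by (subst D.comp_assoc) simp_all
  ultimately show ?thesis by simp
qed

text \<open>The additivity equation of \<open>F h\<close> at \<open>x, y\<close> is the image under \<open>F\<close> of that of \<open>h\<close> at
  \<open>\<pi>\<^sub>0, \<pi>\<^sub>1\<close>, precomposed with \<open>\<langle>x, y\<rangle>;\<psi>\<close>.\<close>

lemma additive_map_F:
  assumes h: "additive_map C h" "h \<in> Arr C"
  shows "additive_map D (Fa h)"
  unfolding additive_map_def
proof (intro conjI ballI)
  let ?X = "Dom C h"
  fix Z x y assume xy: "Z \<in> Obj D" "x \<in> Hom D Z (Dom D (Fa h))" "y \<in> Hom D Z (Dom D (Fa h))"
  let ?w = "Comp D (Pair D x y) (psi ?X ?X)"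
  have "Comp C (Add C (Pi0 C ?X ?X) (Pi1 C ?X ?X)) h =
      Add C (Comp C (Pi0 C ?X ?X) h) (Comp C (Pi1 C ?X ?X) h)"
    by (rule C.additive_mapD_add) (use h in simp_all)
  moreover have
      "Comp D ?w (Fa (Comp C (Add C (Pi0 C ?X ?X) (Pi1 C ?X ?X)) h)) = Comp D (Add D x y) (Fa h)"
    using xy h by (simp add: Hom_def)
  moreover have "Comp D ?w (Fa (Add C (Comp C (Pi0 C ?X ?X) h) (Comp C (Pi1 C ?X ?X) h))) =
      Add D (Comp D x (Fa h)) (Comp D y (Fa h))"
    using xy h by (simp add: Hom_def)
  ultimately show "Comp D (Add D x y) (Fa h) = Add D (Comp D x (Fa h)) (Comp D y (Fa h))"
    by simp
next
  let ?X = "Dom C h"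
  fix Z assume Z: "Z \<in> Obj D"
  have "Comp C (Zero C ?X ?X) h = Zero C ?X (Cod C h)"
    by (rule C.additive_mapD_zero) (use h in simp_all)
  moreover have "Comp D (Zero D Z (Fo ?X)) (Fa (Comp C (Zero C ?X ?X) h)) =
      Comp D (Zero D Z (Fo ?X)) (Fa h)"
    using Z h by simp
  moreover have "Comp D (Zero D Z (Fo ?X)) (Fa (Zero C ?X (Cod C h))) = Zero D Z (Fo (Cod C h))"
    using Z h by simp
  ultimately show "Comp D (Zero D Z (Dom D (Fa h))) (Fa h) = Zero D Z (Cod D (Fa h))"
    using h by simp
qed

text \<open>Likewise, precompose the image of the generic instance of additivity of \<open>f\<^sup>*\<close> on
  \<open>(A \<times> B) \<times> B\<close> with \<open>\<langle>\<langle>x, a\<^sub>1\<rangle>;\<psi>, a\<^sub>2\<rangle>;\<psi>\<close>.\<close>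

lemma additive_snd_F:
  assumes fs: "A \<in> Obj C" "B \<in> Obj C" "fs \<in> Arr C" "Dom C fs = Prod C A B" "additive_snd C A B fs"
  shows "additive_snd D (Fo A) (Fo B) (Comp D (psi A B) (Fa fs))"
  unfolding additive_snd_def
proof (intro conjI ballI)
  fix Z x a1 a2
  assume xa: "Z \<in> Obj D" "x \<in> Hom D Z (Fo A)" "a1 \<in> Hom D Z (Fo B)" "a2 \<in> Hom D Z (Fo B)"
  let ?P = "Prod C A B"
  let ?u = "Comp C (Pi0 C ?P B) (Pi0 C A B)"
    and ?v1 = "Comp C (Pi0 C ?P B) (Pi1 C A B)" and ?v2 = "Pi1 C ?P B"
  let ?w = "Comp D (Pair D (Comp D (Pair D x a1) (psi A B)) a2) (psi ?P B)"
  have "Comp C (Pair C ?u (Add C ?v1 ?v2)) fs =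
      Add C (Comp C (Pair C ?u ?v1) fs) (Comp C (Pair C ?u ?v2) fs)"
    by (rule C.additive_sndD_add) (use fs in simp_all)
  moreover have "Comp D ?w (Fa (Comp C (Pair C ?u (Add C ?v1 ?v2)) fs)) =
      Comp D (Pair D x (Add D a1 a2)) (Comp D (psi A B) (Fa fs))"
    using xa fs by (simp add: Hom_def del: C.additive_sndD_add)
  moreover have "Comp D ?w (Fa (Add C (Comp C (Pair C ?u ?v1) fs) (Comp C (Pair C ?u ?v2) fs))) =
      Add D (Comp D (Pair D x a1) (Comp D (psi A B) (Fa fs)))
        (Comp D (Pair D x a2) (Comp D (psi A B) (Fa fs)))"
    using xa fs by (simp add: Hom_def)
  ultimately show "Comp D (Pair D x (Add D a1 a2)) (Comp D (psi A B) (Fa fs)) =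
      Add D (Comp D (Pair D x a1) (Comp D (psi A B) (Fa fs)))
        (Comp D (Pair D x a2) (Comp D (psi A B) (Fa fs)))"
    by simp
next
  fix Z x assume x: "Z \<in> Obj D" "x \<in> Hom D Z (Fo A)"
  have "Comp C (Pair C (Id C A) (Zero C A B)) fs = Zero C A (Cod C fs)"
    by (rule C.additive_sndD_zero) (use fs in simp_all)
  moreover have "Comp D x (Fa (Comp C (Pair C (Id C A) (Zero C A B)) fs)) =
      Comp D (Pair D x (Zero D Z (Fo B))) (Comp D (psi A B) (Fa fs))"
    using x fs by (simp add: Hom_def del: C.additive_sndD_zero)
  moreover have "Comp D x (Fa (Zero C A (Cod C fs))) = Zero D Z (Fo (Cod C fs))"
    using x fs by (simp add: Hom_def)
  ultimately show "Comp D (Pair D x (Zero D Z (Fo B))) (Comp D (psi A B) (Fa fs)) =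
      Zero D Z (Cod D (Comp D (psi A B) (Fa fs)))"
    using fs by simp
qed

lemma phi_eq_pair[simp]: "X \<in> Obj C \<Longrightarrow> Y \<in> Obj C \<Longrightarrow>
    Pair D (Fa (Pi0 C X Y)) (Fa (Pi1 C X Y)) = phi X Y"
  by (simp add: prod_cmp_def)

lemma additive_map_phi: "X \<in> Obj C \<Longrightarrow> Y \<in> Obj C \<Longrightarrow> additive_map D (phi X Y)"
  unfolding prod_cmp_def
  by (rule D.additive_map_pair) (simp_all add: additive_map_F C.additive_map_pi0 C.additive_map_pi1)

lemma additive_map_psi: "X \<in> Obj C \<Longrightarrow> Y \<in> Obj C \<Longrightarrow> additive_map D (psi X Y)"
  by (rule D.additive_map_iso_inv) (simp_all add: is_iso_phi additive_map_phi)

section \<open>The lens functor\<close>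

abbreviation LF where "LF \<equiv> LensA_fun C D F"

lemma LensA_fun_obj[simp]: "fst LF (A, A') = (Fo A, Fo A')"
  and LensA_fun_arr[simp]: "snd LF ((A, A'), (B, B'), f, fs) =
    ((Fo A, Fo A'), (Fo B, Fo B'), Fa f, Comp D (psi A B') (Fa fs))"
  by (simp_all add: LensA_fun_def)

lemma LensA_fun_hom: "l \<in> Hom (LensA C) X Y \<Longrightarrow> snd LF l \<in> Hom (LensA D) (fst LF X) (fst LF Y)"
  by (cases X; cases Y) (clarsimp simp: C.LensA_hom D.LensA_hom, (rule additive_snd_F; simp))

lemma LensA_fun_id: "X \<in> Obj (LensA C) \<Longrightarrow> snd LF (Id (LensA C) X) = Id (LensA D) (fst LF X)"
  by (cases X) (simp add: C.LensA_Obj)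

lemma LensA_fun_comp: "l \<in> Hom (LensA C) X Y \<Longrightarrow> k \<in> Hom (LensA C) Y Z \<Longrightarrow>
    snd LF (Comp (LensA C) l k) = Comp (LensA D) (snd LF l) (snd LF k)"
  by (cases X; cases Y; cases Z) (clarsimp simp: C.LensA_hom)

lemma LensA_fun_add: "l \<in> Hom (LensA C) X Y \<Longrightarrow> k \<in> Hom (LensA C) X Y \<Longrightarrow>
    snd LF (Add (LensA C) l k) = Add (LensA D) (snd LF l) (snd LF k)"
  by (cases X; cases Y) (clarsimp simp: C.LensA_hom)

lemma LensA_fun_zero: "X \<in> Obj (LensA C) \<Longrightarrow> Y \<in> Obj (LensA C) \<Longrightarrow>
    snd LF (Zero (LensA C) X Y) = Zero (LensA D) (fst LF X) (fst LF Y)"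
  by (cases X; cases Y) (simp add: C.LensA_Obj)

lemma prod_cmp_LensA_fun:
  "A \<in> Obj C \<Longrightarrow> A' \<in> Obj C \<Longrightarrow> B \<in> Obj C \<Longrightarrow> B' \<in> Obj C \<Longrightarrow>
    prod_cmp (LensA C) (LensA D) LF (A, A') (B, B') =
      ((Fo (Prod C A B), Fo (Prod C A' B')), (Prod D (Fo A) (Fo B), Prod D (Fo A') (Fo B')),
       phi A B, Comp D (Pi1 D (Fo (Prod C A B)) (Prod D (Fo A') (Fo B'))) (psi A' B'))"
  unfolding prod_cmp_def[of "LensA C"] by (simp add: D.additive_map_split additive_map_psi)

lemma is_iso_prod_cmp_LensA_fun:
  assumes "X \<in> Obj (LensA C)" "Y \<in> Obj (LensA C)"
  shows "is_iso (LensA D) (prod_cmp (LensA C) (LensA D) LF X Y)"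
proof -
  obtain A A' B B' where XY: "X = (A, A')" "Y = (B, B')"
    and objs: "A \<in> Obj C" "A' \<in> Obj C" "B \<in> Obj C" "B' \<in> Obj C"
    using assms by (auto simp: C.LensA_Obj)
  let ?inv = "((Prod D (Fo A) (Fo B), Prod D (Fo A') (Fo B')), (Fo (Prod C A B), Fo (Prod C A' B')),
    psi A B, Comp D (Pi1 D (Prod D (Fo A) (Fo B)) (Fo (Prod C A' B'))) (phi A' B'))"
  have "?inv \<in> Hom (LensA D) (Cod (LensA D) (prod_cmp (LensA C) (LensA D) LF X Y))
    (Dom (LensA D) (prod_cmp (LensA C) (LensA D) LF X Y))"
    using objs by (simp add: XY prod_cmp_LensA_fun D.LensA_Arr Hom_def D.additive_snd_pi1_comp
        additive_map_phi)
  moreover have "prod_cmp (LensA C) (LensA D) LF X Y \<in> Arr (LensA D)"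
    using objs by (simp add: XY prod_cmp_LensA_fun D.LensA_Arr Hom_def D.additive_snd_pi1_comp
        additive_map_psi)
  ultimately show ?thesis
    unfolding is_iso_def using objs
    by (intro conjI bexI[of _ ?inv]) (simp_all add: XY prod_cmp_LensA_fun)
qed

lemma is_cla_functor_LensA_fun: "is_cla_functor (LensA C) (LensA D) LF"
  unfolding is_cla_functor_def
proof (intro conjI ballI allI impI)
  fix X assume "X \<in> Obj (LensA C)"
  then show "fst LF X \<in> Obj (LensA D)" by (cases X) (simp add: C.LensA_Obj D.LensA_Obj)
next
  show "is_terminal (LensA D) (fst LF (Term (LensA C)))"
    using D.is_terminal_LensA[OF is_terminal_F_Term] by simp
qed (simp_all add: LensA_fun_hom LensA_fun_id LensA_fun_comp is_iso_prod_cmp_LensA_fun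
    LensA_fun_add LensA_fun_zero)

end

section \<open>Functoriality of the lens construction\<close>

lemma (in cla_category) LensA_fun_id_functor: "functor_eq L (LensA_fun C C id_functor) id_functor"
  unfolding functor_eq_def
proof (intro conjI ballI)
  fix X assume "X \<in> Obj L"
  then show "fst (LensA_fun C C id_functor) X = fst id_functor X"
    by (cases X) (simp add: LensA_fun_def id_functor_def)
next
  fix l assume "l \<in> Arr L"
  then obtain A A' B B' f fs where l: "l = ((A, A'), (B, B'), f, fs)"
    "A \<in> Obj C" "A' \<in> Obj C" "B \<in> Obj C" "B' \<in> Obj C" "fs \<in> Arr C" "Dom C fs = Prod C A B'"
    by (rule LensA_ArrE)
  have "prod_cmp C C id_functor A B' = Id C (Prod C A B')"
    using l by (simp add: prod_cmp_def id_functor_def)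
  moreover have "iso_inv C (Id C (Prod C A B')) = Id C (Prod C A B')"
    using l by (intro iso_inv_unique is_iso_id) simp_all
  ultimately show "snd (LensA_fun C C id_functor) l = snd id_functor l"
    using l by (simp add: LensA_fun_def id_functor_def)
qed

locale cla_functor_comp = F: cla_functor C D F + G: cla_functor D E G
  for C :: "('o, 'a) cla" and D :: "('p, 'b) cla" and E :: "('q, 'c) cla" and F G
begin

lemma prod_cmp_comp_functor:
  assumes "A \<in> Obj C" "B \<in> Obj C"
  shows "prod_cmp C E (comp_functor F G) A B = Comp E (G.Fa (F.phi A B)) (G.phi (F.Fo A) (F.Fo B))"
proof -
  have "G.Fa (F.phi A B) = Comp E (Pair E (G.Fa (F.Fa (Pi0 C A B))) (G.Fa (F.Fa (Pi1 C A B))))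
      (G.psi (F.Fo A) (F.Fo B))"
    using assms by (simp add: prod_cmp_def[of C D F] del: F.phi_eq_pair)
  then have "Comp E (G.Fa (F.phi A B)) (G.phi (F.Fo A) (F.Fo B)) =
      Pair E (G.Fa (F.Fa (Pi0 C A B))) (G.Fa (F.Fa (Pi1 C A B)))"
    using assms by (simp add: G.D.comp_assoc)
  then show ?thesis by (simp add: prod_cmp_def[of C E] comp_functor_def)
qed

lemma iso_inv_prod_cmp_comp_functor:
  assumes "A \<in> Obj C" "B \<in> Obj C"
  shows "iso_inv E (prod_cmp C E (comp_functor F G) A B) =
    Comp E (G.psi (F.Fo A) (F.Fo B)) (G.Fa (F.psi A B))"
proof -
  have inv1: "Comp E (G.Fa (F.phi A B)) (G.Fa (F.psi A B)) = Id E (G.Fo (F.Fo (Prod C A B)))"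
    using assms G.F_comp[of "F.phi A B" "F.psi A B", symmetric] by simp
  have inv2: "Comp E (G.Fa (F.psi A B)) (G.Fa (F.phi A B)) = Id E (G.Fo (Prod D (F.Fo A) (F.Fo B)))"
    using assms G.F_comp[of "F.psi A B" "F.phi A B", symmetric] by simp
  have "is_iso E (prod_cmp C E (comp_functor F G) A B)"
    unfolding is_iso_def prod_cmp_comp_functor[OF assms]
    using assms inv1 inv2
    by (intro conjI bexI[of _ "Comp E (G.psi (F.Fo A) (F.Fo B)) (G.Fa (F.psi A B))"])
      (simp_all add: Hom_def G.D.comp_assoc[symmetric])
  then show ?thesis
    by (rule G.D.iso_inv_unique)
      (use assms inv1 inv2 in \<open>simp_all add: prod_cmp_comp_functor G.D.comp_assoc[symmetric]\<close>)
qed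

lemma LensA_fun_comp_functor: "functor_eq (LensA C) (LensA_fun C E (comp_functor F G))
    (comp_functor (LensA_fun C D F) (LensA_fun D E G))"
  unfolding functor_eq_def
proof (intro conjI ballI)
  fix X assume "X \<in> Obj (LensA C)"
  then show "fst (LensA_fun C E (comp_functor F G)) X =
      fst (comp_functor (LensA_fun C D F) (LensA_fun D E G)) X"
    by (cases X) (simp add: LensA_fun_def comp_functor_def)
next
  fix l assume "l \<in> Arr (LensA C)"
  then obtain A A' B B' f fs where l: "l = ((A, A'), (B, B'), f, fs)"
    "A \<in> Obj C" "A' \<in> Obj C" "B \<in> Obj C" "B' \<in> Obj C" "f \<in> Arr C" "Dom C f = A" "Cod C f = B"
    "fs \<in> Arr C" "Dom C fs = Prod C A B'" "Cod C fs = A'"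
    by (rule F.C.LensA_ArrE)
  then show "snd (LensA_fun C E (comp_functor F G)) l =
      snd (comp_functor (LensA_fun C D F) (LensA_fun D E G)) l"
    using iso_inv_prod_cmp_comp_functor[of A B']
    by (simp add: LensA_fun_def comp_functor_def G.D.comp_assoc)
qed

end

theorem theorem2p10:
  shows "(\<forall>C :: ('o, 'a) cla. is_cla C \<longrightarrow> is_cla (LensA C)) \<and>
    (\<forall>(C :: ('o, 'a) cla) (D :: ('p, 'b) cla) F.
        is_cla C \<and> is_cla D \<and> is_cla_functor C D F \<longrightarrow>
        is_cla_functor (LensA C) (LensA D) (LensA_fun C D F)) \<and>
    (\<forall>C :: ('o, 'a) cla. is_cla C \<longrightarrow>
        functor_eq (LensA C) (LensA_fun C C id_functor) id_functor) \<and>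
    (\<forall>(C :: ('o, 'a) cla) (D :: ('p, 'b) cla) (E :: ('q, 'c) cla) F G.
        is_cla C \<and> is_cla D \<and> is_cla E \<and>
        is_cla_functor C D F \<and> is_cla_functor D E G \<longrightarrow>
        functor_eq (LensA C) (LensA_fun C E (comp_functor F G))
          (comp_functor (LensA_fun C D F) (LensA_fun D E G)))"
  using cla_category.is_cla_LensA cla_functor.is_cla_functor_LensA_fun
    cla_category.LensA_fun_id_functor cla_functor_comp.LensA_fun_comp_functor
  unfolding cla_functor_comp_def cla_functor_def cla_functor_axioms_def cla_category_def
  by blast

end
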